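(* Let $\ell\ge 2$, $N\ge 1$ and $D\ge 0$ be integers and let $T=4D\lceil\log_\ell N\rceil+1$. There exists a $T$-$(T,N,D)$-tropical protocol within maximum delay $\ell$.
   Context: Tropical arithmetic on $\mathbb{R}\cup\{\infty\}$: $x\oplus y=\min(x,y)$, $x\odot y=x+y$, with $x\oplus\infty=x$ and $x\odot\infty=\infty$; for a matrix $S$ and vector $\mathbf{x}$, $(S\odot\mathbf{x})_t=\min_j(S_{tj}+x_j)$. An $R$-$(T,N,D)$-tropical protocol consists of $R$ functions $\mathcal{S}^{(1)},\dots,\mathcal{S}^{(R)}$: $S^{(1)}=\mathcal{S}^{(1)}()$ is a fixed matrix, and for $r\ge 2$, $S^{(r)}=\mathcal{S}^{(r)}$ applied to the results $\bigl(S^{(1)};\dots;S^{(r-1)}\bigr)\odot\mathbf{x}$ of all previous rounds (vertical stacking); each $S^{(r)}$ has $N$ columns, entries in $\{0\}\cup\mathbb{N}\cup\{\infty\}$, and a number of rows that may depend on previous results, the total number of rows being at most $T$ for every $\mathbf{x}$; and the final result $\bigl(S^{(1)};\dots;S^{(R)}\bigr)\odot\mathbf{x}$ determines $\mathbf{x}$ uniquely among all $\mathbf{x}\in(\{0\}\cup\mathbb{N}\cup\{\infty\})^N$ with at most $D$ finite entries. It is within maximum delay $\ell$ if all schedule matrices use only entries in $\{0,1,\dots,\ell,\infty\}$. *)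

theory Defs
  imports Complex_Main "HOL-Library.Extended_Nat"
begin

text \<open>Tropical (min,+) arithmetic on enat = {0} \<union> \<nat> \<union> {\<infinity>}.
  A vector is an enat list of length N; a matrix is a list of rows (enat lists).\<close>

definition trop_row :: "enat list \<Rightarrow> enat list \<Rightarrow> enat" where
  "trop_row row x = (INF j\<in>{..<length x}. row ! j + x ! j)"

definition trop_mult :: "enat list list \<Rightarrow> enat list \<Rightarrow> enat list" where
  "trop_mult S x = map (\<lambda>row. trop_row row x) S"

text \<open>A protocol: P r gives the schedule matrix of round r+1 (r = 0,1,...) as a function
  of the stacked results of all previous rounds (for r = 0 the argument is [], so
  the first matrix is fixed).  run P r x = (S1;...;Sr) \<odot> x.\<close>

fun trop_run :: "(nat \<Rightarrow> enat list \<Rightarrow> enat list list) \<Rightarrow> nat \<Rightarrow> enat list \<Rightarrow> enat list" where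
  "trop_run P 0 x = []"
| "trop_run P (Suc r) x = trop_run P r x @ trop_mult (P r (trop_run P r x)) x"

definition num_finite :: "enat list \<Rightarrow> nat" where
  "num_finite x = card {i. i < length x \<and> x ! i \<noteq> \<infinity>}"

definition tropical_protocol ::
  "nat \<Rightarrow> nat \<Rightarrow> nat \<Rightarrow> nat \<Rightarrow> (nat \<Rightarrow> enat list \<Rightarrow> enat list list) \<Rightarrow> bool" where
  "tropical_protocol R T N D P \<longleftrightarrow>
     (\<forall>x. length x = N \<longrightarrow>
        (\<forall>r<R. \<forall>row\<in>set (P r (trop_run P r x)). length row = N)
        \<and> length (trop_run P R x) \<le> T)
   \<and> (\<forall>x y. length x = N \<longrightarrow> length y = N \<longrightarrow> num_finite x \<le> D \<longrightarrow> num_finite y \<le> D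
        \<longrightarrow> trop_run P R x = trop_run P R y \<longrightarrow> x = y)"

definition within_delay :: "nat \<Rightarrow> nat \<Rightarrow> nat \<Rightarrow> (nat \<Rightarrow> enat list \<Rightarrow> enat list list) \<Rightarrow> bool" where
  "within_delay R N l P \<longleftrightarrow>
     (\<forall>x. length x = N \<longrightarrow> (\<forall>r<R. \<forall>row\<in>set (P r (trop_run P r x)). \<forall>e\<in>set row.
         e = \<infinity> \<or> e \<le> enat l))"

end

theory Submission
  imports Defs
begin

text \<open>Index the coordinates by their base-\<open>l\<close> digits, i.e. by the leaves of a complete
  \<open>l\<close>-ary tree of depth \<open>k = \<lceil>log\<^sub>l N\<rceil>\<close>. One row with delay \<open>i\<close> on the \<open>i\<close>-th block of
  a split returns \<open>r = min\<^sub>i (i + m\<^sub>i)\<close>, where \<open>m\<^sub>i\<close> are the block minima; if the overall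
  minimum \<open>m\<close> is known, no block before \<open>s = r - m\<close> attains \<open>m\<close> and none after \<open>s\<close> attains
  \<open>r\<close>. Asking the same kind of row for the blocks from \<open>s\<close> on therefore either shows that block
  \<open>s\<close> attains \<open>m\<close>, or splits the blocks into two groups whose minimum and ranked minimum are
  again known. Each block with a finite minimum is thus reached with at most four rows and
  then explored recursively, so every finite entry costs at most four rows per level of the
  tree, \<open>4 D k\<close> in total, plus one row for the global minimum. Since each round may depend on
  the previous answers, this adaptive search is a protocol with one row per round.\<close>

datatype ('q, 'a) strategy = Done 'a | Query 'q "enat \<Rightarrow> ('q, 'a) strategy"

primrec bind_strategy :: "('q, 'a) strategy \<Rightarrow> ('a \<Rightarrow> ('q, 'b) strategy) \<Rightarrow> ('q, 'b) strategy" where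
  "bind_strategy (Done v) f = f v"
| "bind_strategy (Query q k) f = Query q (\<lambda>a. bind_strategy (k a) f)"

primrec outcome :: "('q \<Rightarrow> enat) \<Rightarrow> ('q, 'a) strategy \<Rightarrow> 'a" where
  "outcome ans (Done v) = v"
| "outcome ans (Query q k) = outcome ans (k (ans q))"

primrec queries :: "('q \<Rightarrow> enat) \<Rightarrow> ('q, 'a) strategy \<Rightarrow> 'q list" where
  "queries ans (Done v) = []"
| "queries ans (Query q k) = q # queries ans (k (ans q))"

lemma outcome_bind_strategy [simp]:
  "outcome ans (bind_strategy t f) = outcome ans (f (outcome ans t))"
  by (induction t) auto

lemma queries_bind_strategy [simp]:
  "queries ans (bind_strategy t f) = queries ans t @ queries ans (f (outcome ans t))"
  by (induction t) auto

lemma outcome_cong_answers: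
  "map ans1 (queries ans1 t) = map ans2 (queries ans2 t) \<Longrightarrow> outcome ans1 t = outcome ans2 t"
  by (induction t) auto

fun follow :: "('q, 'a) strategy \<Rightarrow> enat list \<Rightarrow> ('q, 'a) strategy" where
  "follow t [] = t"
| "follow (Done v) (a # as) = Done v"
| "follow (Query q k) (a # as) = follow (k a) as"

lemma follow_answer_prefix:
  "case follow t (take r (map ans (queries ans t))) of
     Done _ \<Rightarrow> length (queries ans t) \<le> r
   | Query q _ \<Rightarrow> r < length (queries ans t) \<and> q = queries ans t ! r"
proof (induction t arbitrary: r)
  case (Done v)
  then show ?case by (cases r) auto
next
  case (Query q k)
  show ?case
  proof (cases r)
    case (Suc r')
    with Query.IH[of "k (ans q)" r'] show ?thesis by (auto split: strategy.splits)
  qed simp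
qed

definition strategy_protocol ::
  "('q \<Rightarrow> enat list) \<Rightarrow> ('q, 'a) strategy \<Rightarrow> nat \<Rightarrow> enat list \<Rightarrow> enat list list" where
  "strategy_protocol row t r res =
     (case follow t res of Done _ \<Rightarrow> [] | Query q _ \<Rightarrow> [row q])"

lemma row_of_strategy_protocol:
  "row' \<in> set (strategy_protocol row t r res) \<Longrightarrow> \<exists>q. row' = row q"
  unfolding strategy_protocol_def by (auto split: strategy.splits)

lemma trop_run_strategy_protocol:
  fixes row :: "'q \<Rightarrow> enat list" and x :: "enat list"
  defines "ans \<equiv> \<lambda>q. trop_row (row q) x"
  shows "trop_run (strategy_protocol row t) r x = take r (map ans (queries ans t))"
proof (induction r)
  case 0
  show ?case by simp
next
  case (Suc r)
  let ?A = "map ans (queries ans t)"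
  have prefix: "case follow t (take r ?A) of
      Done _ \<Rightarrow> length (queries ans t) \<le> r
    | Query q _ \<Rightarrow> r < length (queries ans t) \<and> q = queries ans t ! r"
    by (rule follow_answer_prefix)
  show ?case
  proof (cases "follow t (take r ?A)")
    case (Done v)
    with prefix Suc.IH show ?thesis
      by (simp add: strategy_protocol_def trop_mult_def)
  next
    case (Query q k)
    with prefix have "r < length ?A" "?A ! r = trop_row (row q) x"
      by (auto simp: ans_def)
    then have "take (Suc r) ?A = take r ?A @ [trop_row (row q) x]"
      by (simp add: take_Suc_conv_app_nth)
    with Query Suc.IH show ?thesis
      by (simp add: strategy_protocol_def trop_mult_def)
  qed
qed

lemma tropical_protocol_strategy_protocol:
  assumes row_length: "\<And>q. length (row q) = N"
    and recovers: "\<And>x. length x = N \<Longrightarrow> num_finite x \<le> D \<Longrightarrow>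
      length (queries (\<lambda>q. trop_row (row q) x) t) \<le> T \<and>
      (\<forall>j<N. outcome (\<lambda>q. trop_row (row q) x) t j = x ! j)"
  shows "tropical_protocol T T N D (strategy_protocol row t)"
  unfolding tropical_protocol_def
proof (intro conjI allI impI)
  fix x :: "enat list" and r
  assume "length x = N" "r < T"
  then show "\<forall>row'\<in>set (strategy_protocol row t r (trop_run (strategy_protocol row t) r x)).
      length row' = N"
    using row_of_strategy_protocol row_length by blast
next
  fix x :: "enat list"
  show "length (trop_run (strategy_protocol row t) T x) \<le> T"
    by (simp add: trop_run_strategy_protocol)
next
  fix x y :: "enat list"
  assume x: "length x = N" "num_finite x \<le> D" and y: "length y = N" "num_finite y \<le> D"
    and same_run: "trop_run (strategy_protocol row t) T x = trop_run (strategy_protocol row t) T y"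
  let ?ans = "\<lambda>x q. trop_row (row q) x"
  have "outcome (?ans x) t = outcome (?ans y) t"
    using same_run recovers[OF x] recovers[OF y]
    by (intro outcome_cong_answers) (simp add: trop_run_strategy_protocol)
  with recovers[OF x] recovers[OF y] x(1) y(1) show "x = y"
    by (simp add: nth_equalityI)
qed

lemma within_delay_strategy_protocol:
  assumes "\<And>q e. e \<in> set (row q) \<Longrightarrow> e = \<infinity> \<or> e \<le> enat l"
  shows "within_delay R N l (strategy_protocol row t)"
  unfolding within_delay_def using assms row_of_strategy_protocol by blast

lemma enat_INF_attained:
  fixes f :: "'a \<Rightarrow> enat"
  assumes "I \<noteq> {}"
  obtains i where "i \<in> I" "f i = (INF i\<in>I. f i)"
  using wellorder_InfI[of _ "f ` I"] assms by (metis all_not_in_conv image_eqI imageE)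

lemma INF_nonempty_if_finite:
  "(INF i\<in>I. f i) \<noteq> (\<infinity>::enat) \<Longrightarrow> I \<noteq> {}"
  by (auto simp: top_enat_def)

lemma INF_add_right_enat: "(INF i\<in>I. f i) + (y::enat) = (INF i\<in>I. f i + y)"
proof (cases "I = {}")
  case True
  then show ?thesis by (simp add: top_enat_def)
next
  case False
  then obtain i0 where "i0 \<in> I" "f i0 = (INF i\<in>I. f i)"
    by (rule enat_INF_attained)
  then show ?thesis
    by (intro antisym INF_greatest) (auto intro: INF_lower INF_lower2 add_right_mono)
qed

lemma INF_add_left_enat: "(y::enat) + (INF i\<in>I. f i) = (INF i\<in>I. y + f i)"
  using INF_add_right_enat[of f I y] by (simp add: add.commute)

lemma INF_UNION: "(INF x\<in>(\<Union>y\<in>A. g y). f x) = (INF y\<in>A. INF x\<in>g y. f x :: 'a :: complete_lattice)"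
  by (rule order_antisym) (blast intro: INF_greatest INF_lower2)+

lemma INF_set_conv_nth: "(INF A\<in>set L. f A) = (INF i\<in>{..<length L}. f (L ! i))"
proof -
  have "set L = (!) L ` {..<length L}"
    by (auto simp: in_set_conv_nth)
  then show ?thesis by (simp add: image_image)
qed

type_synonym delay_query = "(nat set \<times> nat) list"

definition query_row :: "nat \<Rightarrow> nat \<Rightarrow> delay_query \<Rightarrow> enat list" where
  "query_row N l q = map (\<lambda>j. INF p\<in>{p\<in>set q. j \<in> fst p}. enat (min (snd p) l)) [0..<N]"

definition min_on :: "nat \<Rightarrow> enat list \<Rightarrow> nat set \<Rightarrow> enat" where
  "min_on N x A = (INF j\<in>A \<inter> {..<N}. x ! j)"

definition query_answer :: "nat \<Rightarrow> nat \<Rightarrow> enat list \<Rightarrow> delay_query \<Rightarrow> enat" where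
  "query_answer N l x q = (INF p\<in>set q. enat (min (snd p) l) + min_on N x (fst p))"

lemma length_query_row [simp]: "length (query_row N l q) = N"
  by (simp add: query_row_def)

lemma trop_row_query_row:
  assumes "length x = N"
  shows "trop_row (query_row N l q) x = query_answer N l x q"
proof -
  have "trop_row (query_row N l q) x =
      (INF j\<in>{..<N}. INF p\<in>{p\<in>set q. j \<in> fst p}. enat (min (snd p) l) + x ! j)"
    unfolding trop_row_def query_row_def using assms by (simp add: INF_add_right_enat)
  also have "\<dots> = (INF p\<in>set q. INF j\<in>fst p \<inter> {..<N}. enat (min (snd p) l) + x ! j)"
    by (rule antisym; auto intro!: INF_greatest intro: INF_lower2)
  also have "\<dots> = query_answer N l x q"
    unfolding query_answer_def min_on_def by (simp add: INF_add_left_enat)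
  finally show ?thesis .
qed

lemma query_row_within_delay: "e \<in> set (query_row N l q) \<Longrightarrow> e = \<infinity> \<or> e \<le> enat l"
proof -
  assume "e \<in> set (query_row N l q)"
  then obtain j where e: "e = (INF p\<in>{p\<in>set q. j \<in> fst p}. enat (min (snd p) l))"
    unfolding query_row_def by auto
  show ?thesis
  proof (cases "{p\<in>set q. j \<in> fst p} = {}")
    case True
    show ?thesis unfolding e True by (simp add: top_enat_def)
  next
    case False
    then obtain p where "p \<in> set q" "j \<in> fst p" by blast
    then have "e \<le> enat (min (snd p) l)" unfolding e by (auto intro: INF_lower)
    then show ?thesis by (meson enat_ord_simps(1) min.cobounded2 order_trans)
  qed
qed

lemma min_on_infinite: "min_on N x A = \<infinity> \<Longrightarrow> j \<in> A \<Longrightarrow> j < N \<Longrightarrow> x ! j = \<infinity>"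
  unfolding min_on_def by (metis INF_lower IntI enat_ord_simps(5) lessThan_iff)

definition min_query :: "nat set list \<Rightarrow> delay_query" where
  "min_query L = map (\<lambda>A. (A, 0)) L"

definition ranked_query :: "nat set list \<Rightarrow> delay_query" where
  "ranked_query L = zip L [0..<length L]"

lemma query_answer_min_query:
  "query_answer N l x (min_query L) = (INF i\<in>{..<length L}. min_on N x (L ! i))"
  unfolding query_answer_def min_query_def
  by (simp add: image_image zero_enat_def[symmetric] INF_set_conv_nth)

lemma query_answer_ranked_query:
  assumes "length L \<le> l"
  shows "query_answer N l x (ranked_query L) = (INF i\<in>{..<length L}. enat i + min_on N x (L ! i))"
proof -
  have "set (ranked_query L) = (\<lambda>i. (L ! i, i)) ` {..<length L}"
    unfolding ranked_query_def by (auto simp: set_zip)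
  with assms show ?thesis
    unfolding query_answer_def by (auto simp: image_image min_def intro: INF_cong)
qed

text \<open>\<open>m\<close> and \<open>r\<close> are the answers to a minimum query and a ranked query on sets whose
  minima are \<open>a 0, \<dots>, a (n - 1)\<close>.\<close>

locale ranked_minimum =
  fixes n :: nat and a :: "nat \<Rightarrow> enat" and m r :: enat
  assumes min_eq: "m = (INF i\<in>{..<n}. a i)"
    and min_finite: "m \<noteq> \<infinity>"
    and rank_eq: "r = (INF i\<in>{..<n}. enat i + a i)"
begin

lemma min_le: "i < n \<Longrightarrow> m \<le> a i"
  by (simp add: min_eq INF_lower)

lemma rank_le: "i < n \<Longrightarrow> r \<le> enat i + a i"
  unfolding rank_eq by (rule INF_lower) simp

lemma min_attained:
  obtains i where "i < n" "a i = m"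
  using enat_INF_attained[of "{..<n}" a] INF_nonempty_if_finite[of a "{..<n}"] min_eq min_finite
  by auto

lemma min_le_rank: "m \<le> r"
  unfolding rank_eq by (rule INF_greatest) (simp add: min_le add_increasing)

lemma rank_finite: "r \<noteq> \<infinity>"
proof -
  obtain i where "i < n" "a i = m" by (rule min_attained)
  then have "r \<le> enat i + m" using rank_le by fastforce
  with min_finite show ?thesis by (cases r) auto
qed

lemma rank_attained:
  obtains i where "i < n" "enat i + a i = r"
  using enat_INF_attained[of "{..<n}" "\<lambda>i. enat i + a i"]
    INF_nonempty_if_finite[of "\<lambda>i. enat i + a i" "{..<n}"] rank_eq rank_finite
  by auto

definition offset :: nat where
  "offset = the_enat r - the_enat m"

lemma rank_eq_offset: "r = enat offset + m"
  using min_le_rank min_finite rank_finite by (auto simp: offset_def)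

lemma offset_le_if_min: "i < n \<Longrightarrow> a i = m \<Longrightarrow> offset \<le> i"
proof -
  assume "i < n" "a i = m"
  then have "enat offset + m \<le> enat i + m"
    using rank_le[of i] by (simp add: rank_eq_offset[symmetric])
  with min_finite show "offset \<le> i" by (cases m) auto
qed

lemma le_offset_if_rank: "i < n \<Longrightarrow> enat i + a i = r \<Longrightarrow> i \<le> offset"
proof -
  assume "i < n" "enat i + a i = r"
  then have "enat i + m \<le> enat offset + m"
    using min_le[of i] by (metis add_left_mono rank_eq_offset)
  with min_finite show "i \<le> offset" by (cases m) auto
qed

lemma offset_less: "offset < n"
  using min_attained offset_le_if_min by (metis le_less_trans)

lemma first_min_if_rank_eq_min: "r = m \<Longrightarrow> a 0 = m"
proof -
  assume "r = m"
  then have "enat offset + m = 0 + m" by (metis add.left_neutral rank_eq_offset)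
  with min_finite have "offset = 0" by (cases m) (auto simp: zero_enat_def)
  obtain i where i: "i < n" "enat i + a i = r" by (rule rank_attained)
  with \<open>offset = 0\<close> le_offset_if_rank have "i = 0" by fastforce
  with i \<open>r = m\<close> show "a 0 = m" by (simp add: zero_enat_def[symmetric])
qed

lemma suffix_ranked_minimum:
  "ranked_minimum (n - offset) (\<lambda>i. a (offset + i)) m
     (INF i\<in>{..<n - offset}. enat i + a (offset + i))"
proof
  obtain i0 where i0: "i0 < n" "a i0 = m" by (rule min_attained)
  with offset_le_if_min have "offset \<le> i0" by blast
  with i0 min_le show "m = (INF i\<in>{..<n - offset}. a (offset + i))"
    by (intro cInf_eq_minimum[symmetric]) (auto intro!: image_eqI[where x="i0 - offset"])
qed (use min_finite in auto)

lemma prefix_ranked_minimum: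
  assumes "(INF i\<in>{..<n - offset}. enat i + a (offset + i)) \<noteq> m"
  shows "ranked_minimum offset a (INF i\<in>{..<offset}. a i) r"
proof -
  interpret suffix: ranked_minimum "n - offset" "\<lambda>i. a (offset + i)" m
    "INF i\<in>{..<n - offset}. enat i + a (offset + i)"
    by (rule suffix_ranked_minimum)
  obtain i where i: "i < n" "enat i + a i = r" by (rule rank_attained)
  have "i < offset"
  proof (rule ccontr)
    assume "\<not> i < offset"
    with i le_offset_if_rank have "i = offset" by fastforce
    with i have "enat offset + a offset = enat offset + m"
      by (simp add: rank_eq_offset[symmetric])
    then have "a offset = m" by (cases "a offset"; cases m) auto
    then have "(INF i\<in>{..<n - offset}. enat i + a (offset + i)) \<le> m"
      using suffix.rank_le[of 0] offset_less by (simp add: zero_enat_def[symmetric])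
    with suffix.min_le_rank assms show False by simp
  qed
  have "a i \<noteq> \<infinity>" using i rank_finite plus_eq_infty_iff_enat by metis
  show ?thesis
  proof
    show "(INF i\<in>{..<offset}. a i) \<noteq> \<infinity>"
      using \<open>i < offset\<close> \<open>a i \<noteq> \<infinity>\<close> by (metis INF_lower enat_ord_simps(5) lessThan_iff)
    show "r = (INF i\<in>{..<offset}. enat i + a i)"
      using \<open>i < offset\<close> i offset_less rank_le
      by (intro cInf_eq_minimum[symmetric]) (auto intro!: image_eqI[where x=i])
  qed simp
qed

end

lemma ranked_minimum_cong:
  "ranked_minimum n a m r \<Longrightarrow> (\<And>i. i < n \<Longrightarrow> a i = b i) \<Longrightarrow> ranked_minimum n b m r"
  unfolding ranked_minimum_def by (metis (no_types, lifting) INF_cong lessThan_iff)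

definition remove_nth :: "nat \<Rightarrow> 'a list \<Rightarrow> 'a list" where
  "remove_nth i xs = take i xs @ drop (Suc i) xs"

lemma length_remove_nth [simp]: "i < length xs \<Longrightarrow> length (remove_nth i xs) = length xs - 1"
  by (simp add: remove_nth_def)

lemma set_remove_nth: "i < length xs \<Longrightarrow> set xs = insert (xs ! i) (set (remove_nth i xs))"
  unfolding remove_nth_def by (subst id_take_nth_drop[of i xs]) auto

lemma sum_list_map_remove_nth:
  fixes f :: "'a \<Rightarrow> 'b::comm_monoid_add"
  shows "i < length xs \<Longrightarrow> sum_list (map f xs) = f (xs ! i) + sum_list (map f (remove_nth i xs))"
  unfolding remove_nth_def by (subst id_take_nth_drop[of i xs]) (auto simp: add.left_commute)

definition merge_on :: "'a set \<Rightarrow> ('a \<Rightarrow> 'b) \<Rightarrow> ('a \<Rightarrow> 'b) \<Rightarrow> 'a \<Rightarrow> 'b" where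
  "merge_on A g g' j = (if j \<in> A then g j else g' j)"

definition agrees_on :: "nat \<Rightarrow> enat list \<Rightarrow> (nat \<Rightarrow> enat) \<Rightarrow> nat set \<Rightarrow> bool" where
  "agrees_on N x g A \<longleftrightarrow> (\<forall>j\<in>A \<inter> {..<N}. g j = x ! j)"

type_synonym reconstruction = "(delay_query, nat \<Rightarrow> enat) strategy"

definition learn_found ::
  "(nat set list \<Rightarrow> enat \<Rightarrow> enat \<Rightarrow> reconstruction) \<Rightarrow> (nat set \<Rightarrow> enat \<Rightarrow> reconstruction) \<Rightarrow>
    nat set list \<Rightarrow> nat \<Rightarrow> enat \<Rightarrow> reconstruction" where
  "learn_found rec learn L s m =
     bind_strategy (learn (L ! s) m) (\<lambda>g.
       Query (min_query (remove_nth s L)) (\<lambda>m'.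
         if m' = \<infinity> then Done (merge_on (L ! s) g (\<lambda>_. \<infinity>))
         else Query (ranked_query (remove_nth s L)) (\<lambda>r'.
           bind_strategy (rec (remove_nth s L) m' r') (\<lambda>g'. Done (merge_on (L ! s) g g')))))"

definition learn_split ::
  "(nat set list \<Rightarrow> enat \<Rightarrow> enat \<Rightarrow> reconstruction) \<Rightarrow> nat set list \<Rightarrow> nat \<Rightarrow> enat \<Rightarrow> enat \<Rightarrow> enat \<Rightarrow>
    reconstruction" where
  "learn_split rec L s m r r' =
     Query (min_query (take s L)) (\<lambda>m'.
       bind_strategy (rec (take s L) m' r) (\<lambda>g.
         bind_strategy (rec (drop s L) m r') (\<lambda>g'.
           Done (merge_on (\<Union>(set (take s L))) g g'))))"

lemma learn_found_cong [fundef_cong]: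
  "L = L' \<Longrightarrow> s = s' \<Longrightarrow> m = m' \<Longrightarrow> learn = learn' \<Longrightarrow>
    (\<And>a b. rec (remove_nth s' L') a b = rec' (remove_nth s' L') a b) \<Longrightarrow>
    learn_found rec learn L s m = learn_found rec' learn' L' s' m'"
  unfolding learn_found_def by (simp cong: if_cong)

lemma learn_split_cong [fundef_cong]:
  "L = L' \<Longrightarrow> s = s' \<Longrightarrow> m = m' \<Longrightarrow> r = r1 \<Longrightarrow> r' = r1' \<Longrightarrow>
    (\<And>a b. rec (take s' L') a b = rec' (take s' L') a b) \<Longrightarrow>
    (\<And>a b. rec (drop s' L') a b = rec' (drop s' L') a b) \<Longrightarrow>
    learn_split rec L s m r r' = learn_split rec' L' s' m' r1 r1'"
  unfolding learn_split_def by simp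

text \<open>\<open>learn_parts learn L m r\<close> reconstructs \<open>x\<close> on the sets of \<open>L\<close> from their minimum \<open>m\<close> and
  ranked minimum \<open>r\<close>, using \<open>learn A m'\<close> on single sets \<open>A\<close> of known minimum \<open>m'\<close>. Of the two
  groups handled by \<open>learn_split\<close>, the sets before \<open>s\<close> keep the ranked minimum \<open>r\<close> and those
  from \<open>s\<close> on keep the minimum \<open>m\<close>. The branches returning \<open>Done (\<lambda>_. \<infinity>)\<close> are unreachable
  from valid arguments.\<close>

function learn_parts ::
  "(nat set \<Rightarrow> enat \<Rightarrow> reconstruction) \<Rightarrow> nat set list \<Rightarrow> enat \<Rightarrow> enat \<Rightarrow> reconstruction" where
  "learn_parts learn L m r =
    (let s = the_enat r - the_enat m in
     if length L \<le> s then Done (\<lambda>_. \<infinity>)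
     else Query (ranked_query (drop s L)) (\<lambda>r'.
       if r' = m then learn_found (learn_parts learn) learn L s m
       else if s = 0 then Done (\<lambda>_. \<infinity>)
       else learn_split (learn_parts learn) L s m r r'))"
  by pat_completeness auto
termination
  by (relation "measure (\<lambda>(learn, L, m, r). length L)") auto

declare learn_parts.simps [simp del]

context
  fixes N l :: nat and x :: "enat list" and learn :: "nat set \<Rightarrow> enat \<Rightarrow> reconstruction"
    and B :: "nat set \<Rightarrow> nat"
begin

private abbreviation "answer \<equiv> query_answer N l x"
private abbreviation "mn \<equiv> min_on N x"
private abbreviation "learns g L \<equiv> \<forall>A\<in>set L. agrees_on N x g A"
private abbreviation "budget L \<equiv> sum_list (map (\<lambda>A. if mn A = \<infinity> then 0 else 4 + B A) L)"
private abbreviation "reconstructs t L \<equiv> learns (outcome answer t) L \<and> length (queries answer t) + 2 \<le> budget L"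
private abbreviation "learner_ok L \<equiv> \<forall>A\<in>set L. mn A \<noteq> \<infinity> \<longrightarrow>
  agrees_on N x (outcome answer (learn A (mn A))) A \<and> length (queries answer (learn A (mn A))) \<le> B A"
private abbreviation "valid L m r \<equiv> length L \<le> l \<and> learner_ok L \<and> ranked_minimum (length L) (\<lambda>i. mn (L ! i)) m r"

lemma learn_found_correct:
  assumes s: "s < length L" "mn (L ! s) = m" and m: "m \<noteq> \<infinity>"
    and valid: "length L \<le> l" "learner_ok L"
    and rec: "\<And>m' r'. valid (remove_nth s L) m' r' \<Longrightarrow> reconstructs (rec (remove_nth s L) m' r') (remove_nth s L)"
  shows "learns (outcome answer (learn_found rec learn L s m)) L \<and>
    length (queries answer (learn_found rec learn L s m)) + 3 \<le> budget L"
proof -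
  define R where "R = remove_nth s L"
  define g where "g = outcome answer (learn (L ! s) m)"
  have learn_s: "agrees_on N x g (L ! s)" "length (queries answer (learn (L ! s) m)) \<le> B (L ! s)"
    using valid(2) s m unfolding g_def by auto
  have budget: "budget L = 4 + B (L ! s) + budget R"
    using sum_list_map_remove_nth[OF s(1), where f="\<lambda>A. if mn A = \<infinity> then 0 else 4 + B A"] s(2) m unfolding R_def by simp
  have sets: "set L = insert (L ! s) (set R)"
    unfolding R_def by (rule set_remove_nth[OF s(1)])
  define m' where "m' = answer (min_query R)"
  have m': "m' = (INF i\<in>{..<length R}. mn (R ! i))"
    unfolding m'_def by (simp add: query_answer_min_query)
  show ?thesis
  proof (cases "m' = \<infinity>")
    case True
    then have "\<forall>A\<in>set R. mn A = \<infinity>"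
      unfolding m' by (auto simp: in_set_conv_nth) (metis INF_lower enat_ord_simps(5) lessThan_iff)
    then have "learns (merge_on (L ! s) g (\<lambda>_. \<infinity>)) L"
      using learn_s(1) sets min_on_infinite unfolding agrees_on_def merge_on_def by auto
    with True learn_s(2) budget show ?thesis
      by (simp add: learn_found_def m'_def R_def g_def)
  next
    case False
    define r'' where "r'' = answer (ranked_query R)"
    have "length R \<le> l" using valid(1) s(1) unfolding R_def by simp
    then have "valid R m' r''"
      using valid sets False m' query_answer_ranked_query
      unfolding r''_def ranked_minimum_def by auto
    then have IH: "reconstructs (rec R m' r'') R"
      using rec unfolding R_def by auto
    then have "learns (merge_on (L ! s) g (outcome answer (rec R m' r''))) L"
      using learn_s(1) sets unfolding agrees_on_def merge_on_def by auto
    with False learn_s(2) budget IH show ?thesis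
      by (auto simp: learn_found_def m'_def R_def g_def r''_def)
  qed
qed

lemma learn_split_correct:
  assumes s: "0 < s" "s < length L" and valid: "length L \<le> l" "learner_ok L"
    and prefix: "ranked_minimum s (\<lambda>i. mn (L ! i)) (INF i\<in>{..<s}. mn (L ! i)) r"
    and suffix: "ranked_minimum (length L - s) (\<lambda>i. mn (L ! (s + i))) m r'"
    and rec: "\<And>L' m' r'. length L' < length L \<Longrightarrow> valid L' m' r' \<Longrightarrow> reconstructs (rec L' m' r') L'"
  shows "learns (outcome answer (learn_split rec L s m r r')) L \<and>
    length (queries answer (learn_split rec L s m r r')) + 3 \<le> budget L"
proof -
  define T where "T = take s L"
  define D where "D = drop s L"
  define m' where "m' = answer (min_query T)"
  have lengths: "length T = s" "length D = length L - s"
    using s unfolding T_def D_def by auto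
  have "m' = (INF i\<in>{..<s}. mn (L ! i))"
    unfolding m'_def query_answer_min_query lengths by (simp add: T_def)
  then have "ranked_minimum (length T) (\<lambda>i. mn (T ! i)) m' r"
    unfolding lengths by (auto simp: T_def intro: ranked_minimum_cong[OF prefix])
  moreover have "learner_ok T"
    using valid(2) unfolding T_def by (blast dest: in_set_takeD)
  ultimately have IH_T: "reconstructs (rec T m' r) T"
    using rec s lengths valid(1) by simp
  have "ranked_minimum (length D) (\<lambda>i. mn (D ! i)) m r'"
    unfolding lengths by (auto simp: D_def intro: ranked_minimum_cong[OF suffix])
  moreover have "learner_ok D"
    using valid(2) unfolding D_def by (blast dest: in_set_dropD)
  ultimately have IH_D: "reconstructs (rec D m r') D"
    using rec s lengths valid(1) by simp
  have split: "L = T @ D"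
    unfolding T_def D_def by simp
  have sets: "set L = set T \<union> set D"
    by (subst split) simp
  have budget: "budget L = budget T + budget D"
    by (subst split) simp
  have run: "outcome answer (learn_split rec L s m r r') =
      merge_on (\<Union>(set T)) (outcome answer (rec T m' r)) (outcome answer (rec D m r'))"
    "length (queries answer (learn_split rec L s m r r')) =
      1 + length (queries answer (rec T m' r)) + length (queries answer (rec D m r'))"
    by (simp_all add: learn_split_def m'_def flip: T_def D_def)
  have "learns (merge_on (\<Union>(set T)) (outcome answer (rec T m' r)) (outcome answer (rec D m r'))) L"
    using IH_T IH_D sets unfolding agrees_on_def merge_on_def by fastforce
  with IH_T IH_D budget show ?thesis
    unfolding run by linarith
qed

lemma learn_parts_correct: "valid L m r \<Longrightarrow> reconstructs (learn_parts learn L m r) L"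
proof (induction "length L" arbitrary: L m r rule: less_induct)
  case less
  then have valid: "length L \<le> l" "learner_ok L" by auto
  interpret ranked_minimum "length L" "\<lambda>i. mn (L ! i)" m r
    using less.prems by blast
  have rec: "\<And>L' m' r'. length L' < length L \<Longrightarrow> valid L' m' r' \<Longrightarrow>
      reconstructs (learn_parts learn L' m' r') L'"
    using less.hyps by blast
  define r' where "r' = answer (ranked_query (drop offset L))"
  have r': "r' = (INF i\<in>{..<length L - offset}. enat i + mn (L ! (offset + i)))"
    unfolding r'_def using valid(1) by (simp add: query_answer_ranked_query)
  then interpret suffix: ranked_minimum "length L - offset" "\<lambda>i. mn (L ! (offset + i))" m r'
    using suffix_ranked_minimum by simp
  have unfold: "learn_parts learn L m r =
    Query (ranked_query (drop offset L)) (\<lambda>r'.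
      if r' = m then learn_found (learn_parts learn) learn L offset m
      else if offset = 0 then Done (\<lambda>_. \<infinity>)
      else learn_split (learn_parts learn) L offset m r r')"
    using offset_less by (subst learn_parts.simps) (simp add: Let_def flip: offset_def)
  show ?case
  proof (cases "r' = m")
    case True
    then have "mn (L ! offset) = m"
      using suffix.first_min_if_rank_eq_min by simp
    have "learns (outcome answer (learn_found (learn_parts learn) learn L offset m)) L \<and>
        length (queries answer (learn_found (learn_parts learn) learn L offset m)) + 3 \<le> budget L"
    proof (rule learn_found_correct[OF offset_less \<open>mn (L ! offset) = m\<close> min_finite valid])
      fix m' r'' assume "valid (remove_nth offset L) m' r''"
      with rec[of "remove_nth offset L"] offset_less
      show "reconstructs (learn_parts learn (remove_nth offset L) m' r'') (remove_nth offset L)"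
        by simp
    qed
    moreover have "answer (ranked_query (drop offset L)) = m"
      using True by (simp add: r'_def)
    ultimately show ?thesis
      by (simp add: unfold)
  next
    case False
    then have prefix: "ranked_minimum offset (\<lambda>i. mn (L ! i)) (INF i\<in>{..<offset}. mn (L ! i)) r"
      using prefix_ranked_minimum by (simp add: r'[symmetric])
    then have "0 < offset"
      by (metis not_less0 ranked_minimum.min_attained gr0I)
    have "learns (outcome answer (learn_split (learn_parts learn) L offset m r r')) L \<and>
        length (queries answer (learn_split (learn_parts learn) L offset m r r')) + 3 \<le> budget L"
      using \<open>0 < offset\<close> offset_less valid prefix suffix.ranked_minimum_axioms rec
      by (rule learn_split_correct)
    with False \<open>0 < offset\<close> show ?thesis
      by (simp add: unfold flip: r'_def)
  qed
qed

end

definition digit_blocks :: "nat \<Rightarrow> nat \<Rightarrow> nat set \<Rightarrow> nat set list" where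
  "digit_blocks l h A = map (\<lambda>d. {j\<in>A. j div l ^ h mod l = d}) [0..<l]"

definition single_block :: "nat \<Rightarrow> nat \<Rightarrow> nat \<Rightarrow> nat set \<Rightarrow> bool" where
  "single_block N l h A \<longleftrightarrow> (\<forall>j\<in>A \<inter> {..<N}. \<forall>j'\<in>A \<inter> {..<N}. j div l ^ h = j' div l ^ h)"

definition support_count :: "nat \<Rightarrow> enat list \<Rightarrow> nat set \<Rightarrow> nat" where
  "support_count N x A = card {j\<in>A \<inter> {..<N}. x ! j \<noteq> \<infinity>}"

lemma length_digit_blocks [simp]: "length (digit_blocks l h A) = l"
  by (simp add: digit_blocks_def)

lemma nth_digit_blocks [simp]: "d < l \<Longrightarrow> digit_blocks l h A ! d = {j\<in>A. j div l ^ h mod l = d}"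
  by (simp add: digit_blocks_def)

lemma set_digit_blocks: "set (digit_blocks l h A) = (\<lambda>d. {j\<in>A. j div l ^ h mod l = d}) ` {..<l}"
  by (auto simp: digit_blocks_def)

lemma single_block_digit_blocks:
  assumes "single_block N l (Suc h) A" and "C \<in> set (digit_blocks l h A)"
  shows "single_block N l h C"
  unfolding single_block_def
proof (intro ballI)
  fix j j' assume jj': "j \<in> C \<inter> {..<N}" "j' \<in> C \<inter> {..<N}"
  obtain d where C: "C = {j\<in>A. j div l ^ h mod l = d}"
    using assms(2) by (auto simp: set_digit_blocks)
  have "j \<in> A \<inter> {..<N}" "j' \<in> A \<inter> {..<N}"
    using jj' C by auto
  with assms(1) have "j div l ^ Suc h = j' div l ^ Suc h"
    unfolding single_block_def by blast
  then have "j div l ^ h div l = j' div l ^ h div l"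
    by (metis div_mult2_eq power_Suc2)
  moreover have "j div l ^ h mod l = j' div l ^ h mod l"
    using jj' C by auto
  ultimately show "j div l ^ h = j' div l ^ h"
    by (metis div_mult_mod_eq)
qed

lemma Union_digit_blocks: "0 < l \<Longrightarrow> \<Union>(set (digit_blocks l h A)) = A"
  by (auto simp: set_digit_blocks)

lemma min_on_digit_blocks:
  assumes "0 < l"
  shows "min_on N x A = (INF d\<in>{..<l}. min_on N x (digit_blocks l h A ! d))"
proof -
  have "A \<inter> {..<N} = (\<Union>C\<in>set (digit_blocks l h A). C \<inter> {..<N})"
    using Union_digit_blocks[OF assms] by blast
  then have "min_on N x A = (INF C\<in>set (digit_blocks l h A). min_on N x C)"
    unfolding min_on_def by (simp only: INF_UNION)
  then show ?thesis
    by (simp add: INF_set_conv_nth)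
qed

lemma sum_support_count_digit_blocks:
  assumes "0 < l"
  shows "sum_list (map (support_count N x) (digit_blocks l h A)) = support_count N x A"
proof -
  let ?S = "{j\<in>A \<inter> {..<N}. x ! j \<noteq> \<infinity>}"
  have "sum_list (map (support_count N x) (digit_blocks l h A)) =
      (\<Sum>d<l. card {j\<in>?S. j div l ^ h mod l = d})"
    by (simp add: sum_list_sum_nth atLeast0LessThan support_count_def)
      (auto intro!: sum.cong arg_cong[where f=card])
  also have "\<dots> = card (\<Union>d<l. {j\<in>?S. j div l ^ h mod l = d})"
    by (rule card_UN_disjoint[symmetric]) auto
  also have "(\<Union>d<l. {j\<in>?S. j div l ^ h mod l = d}) = ?S"
    using assms by auto
  finally show ?thesis
    unfolding support_count_def[of N x A] .
qed

lemma support_count_pos: "min_on N x A \<noteq> \<infinity> \<Longrightarrow> 0 < support_count N x A"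
proof -
  assume "min_on N x A \<noteq> \<infinity>"
  then obtain j where "j \<in> A \<inter> {..<N}" "x ! j \<noteq> \<infinity>"
    unfolding min_on_def by (metis enat_INF_attained INF_nonempty_if_finite)
  then show ?thesis
    unfolding support_count_def by (auto simp: card_gt_0_iff)
qed

lemma budget_digit_blocks_le:
  assumes "0 < l"
  shows "sum_list (map (\<lambda>C. if min_on N x C = \<infinity> then 0 else 4 + c * support_count N x C)
      (digit_blocks l h A)) \<le> (4 + c) * support_count N x A"
proof -
  have "sum_list (map (\<lambda>C. if min_on N x C = \<infinity> then 0 else 4 + c * support_count N x C)
      (digit_blocks l h A)) \<le> sum_list (map (\<lambda>C. (4 + c) * support_count N x C) (digit_blocks l h A))"
  proof (rule sum_list_mono)
    fix C
    show "(if min_on N x C = \<infinity> then 0 else 4 + c * support_count N x C) \<le>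
        (4 + c) * support_count N x C"
    proof (cases "min_on N x C = \<infinity>")
      case False
      then have "1 \<le> support_count N x C"
        using support_count_pos by (simp add: Suc_le_eq)
      with False show ?thesis by (simp add: algebra_simps)
    qed simp
  qed
  also have "\<dots> = (4 + c) * support_count N x A"
    by (simp only: sum_list_const_mult sum_support_count_digit_blocks[OF assms])
  finally show ?thesis .
qed

fun learn_block :: "nat \<Rightarrow> nat \<Rightarrow> nat set \<Rightarrow> enat \<Rightarrow> reconstruction" where
  "learn_block l 0 A m = Done (\<lambda>_. m)"
| "learn_block l (Suc h) A m =
     Query (ranked_query (digit_blocks l h A)) (learn_parts (learn_block l h) (digit_blocks l h A) m)"

lemma learn_block_correct:
  assumes "0 < l"
  shows "single_block N l h A \<Longrightarrow> m = min_on N x A \<Longrightarrow> m \<noteq> \<infinity> \<Longrightarrow>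
    agrees_on N x (outcome (query_answer N l x) (learn_block l h A m)) A \<and>
    length (queries (query_answer N l x) (learn_block l h A m)) \<le> 4 * h * support_count N x A"
proof (induction h arbitrary: A m)
  case 0
  then obtain j where j: "j \<in> A \<inter> {..<N}"
    unfolding min_on_def by (metis INF_nonempty_if_finite ex_in_conv)
  with "0.prems"(1) have "A \<inter> {..<N} = {j}"
    by (auto simp: single_block_def)
  with "0.prems"(2) show ?case
    by (simp add: min_on_def agrees_on_def)
next
  case (Suc h)
  define Cs where "Cs = digit_blocks l h A"
  define r where "r = query_answer N l x (ranked_query Cs)"
  let ?B = "\<lambda>C. 4 * h * support_count N x C"
  have "ranked_minimum l (\<lambda>d. min_on N x (Cs ! d)) m r"
    using Suc.prems(2,3) min_on_digit_blocks[OF assms]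
    by unfold_locales (simp_all add: Cs_def r_def query_answer_ranked_query)
  moreover have "\<forall>C\<in>set Cs. min_on N x C \<noteq> \<infinity> \<longrightarrow>
      agrees_on N x (outcome (query_answer N l x) (learn_block l h C (min_on N x C))) C \<and>
      length (queries (query_answer N l x) (learn_block l h C (min_on N x C))) \<le> ?B C"
    using Suc.IH Suc.prems(1) single_block_digit_blocks unfolding Cs_def by blast
  ultimately have parts:
    "\<forall>C\<in>set Cs. agrees_on N x (outcome (query_answer N l x) (learn_parts (learn_block l h) Cs m r)) C"
    "length (queries (query_answer N l x) (learn_parts (learn_block l h) Cs m r)) + 2 \<le>
      sum_list (map (\<lambda>C. if min_on N x C = \<infinity> then 0 else 4 + ?B C) Cs)"
    using learn_parts_correct[where learn="learn_block l h" and B="?B" and L=Cs] by (auto simp: Cs_def)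
  note parts(2)
  also have "\<dots> \<le> (4 + 4 * h) * support_count N x A"
    unfolding Cs_def using assms by (rule budget_digit_blocks_le)
  finally have "length (queries (query_answer N l x) (learn_block l (Suc h) A m)) \<le>
      4 * Suc h * support_count N x A"
    by (simp add: Cs_def r_def)
  moreover have "agrees_on N x (outcome (query_answer N l x) (learn_block l (Suc h) A m)) A"
    using parts(1) Union_digit_blocks[OF assms, of h A]
    by (auto simp: agrees_on_def Cs_def r_def)
  ultimately show ?case by blast
qed

definition learn_all :: "nat \<Rightarrow> nat \<Rightarrow> nat \<Rightarrow> reconstruction" where
  "learn_all N l k = Query (min_query [{..<N}])
     (\<lambda>m. if m = \<infinity> then Done (\<lambda>_. \<infinity>) else learn_block l k {..<N} m)"

lemma learn_all_correct:
  assumes "0 < l" and "length x = N" and "N \<le> l ^ k"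
  shows "(\<forall>j<N. outcome (query_answer N l x) (learn_all N l k) j = x ! j) \<and>
    length (queries (query_answer N l x) (learn_all N l k)) \<le> 1 + 4 * k * num_finite x"
proof -
  define m where "m = min_on N x {..<N}"
  have answer: "query_answer N l x (min_query [{..<N}]) = m"
    by (simp add: query_answer_min_query m_def lessThan_Suc)
  show ?thesis
  proof (cases "m = \<infinity>")
    case True
    then show ?thesis
      using answer min_on_infinite[of N x "{..<N}"] by (simp add: learn_all_def m_def)
  next
    case False
    have "single_block N l k {..<N}"
      using assms(3) by (auto simp: single_block_def)
    then have "agrees_on N x (outcome (query_answer N l x) (learn_block l k {..<N} m)) {..<N} \<and>
        length (queries (query_answer N l x) (learn_block l k {..<N} m)) \<le> 4 * k * support_count N x {..<N}"
      using learn_block_correct[OF assms(1)] m_def False by blast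
    moreover have "support_count N x {..<N} = num_finite x"
      using assms(2) by (simp add: support_count_def num_finite_def)
    ultimately show ?thesis
      using answer False by (auto simp: learn_all_def agrees_on_def)
  qed
qed

lemma le_power_ceiling_log:
  assumes "2 \<le> l" and "1 \<le> N"
  shows "N \<le> l ^ nat \<lceil>log (real l) (real N)\<rceil>"
proof -
  have "real N = real l powr log (real l) (real N)"
    using assms by simp
  also have "\<dots> \<le> real l powr real (nat \<lceil>log (real l) (real N)\<rceil>)"
    using assms by (intro powr_mono) auto
  also have "\<dots> = real (l ^ nat \<lceil>log (real l) (real N)\<rceil>)"
    using assms(1) by (simp add: powr_realpow)
  finally show ?thesis by linarith
qed

theorem mainTheorem18:
  fixes l N D :: nat
  assumes "l \<ge> 2" and "N \<ge> 1"
  defines "T \<equiv> 4 * D * nat \<lceil>log (real l) (real N)\<rceil> + 1"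
  shows "\<exists>P. tropical_protocol T T N D P \<and> within_delay T N l P"
proof (intro exI conjI)
  define k where "k = nat \<lceil>log (real l) (real N)\<rceil>"
  have T: "T = 4 * D * k + 1"
    unfolding T_def k_def ..
  have "N \<le> l ^ k"
    unfolding k_def using assms(1,2) by (rule le_power_ceiling_log)
  show "tropical_protocol T T N D (strategy_protocol (query_row N l) (learn_all N l k))"
  proof (rule tropical_protocol_strategy_protocol)
    fix x :: "enat list"
    assume x: "length x = N" "num_finite x \<le> D"
    have answers: "(\<lambda>q. trop_row (query_row N l q) x) = query_answer N l x"
      using x(1) by (simp add: trop_row_query_row)
    have correct: "(\<forall>j<N. outcome (query_answer N l x) (learn_all N l k) j = x ! j) \<and>
        length (queries (query_answer N l x) (learn_all N l k)) \<le> 1 + 4 * k * num_finite x"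
      using assms(1) x(1) \<open>N \<le> l ^ k\<close> by (intro learn_all_correct) auto
    have "1 + 4 * k * num_finite x \<le> T"
      using x(2) unfolding T by simp
    with correct show "length (queries (\<lambda>q. trop_row (query_row N l q) x) (learn_all N l k)) \<le> T \<and>
      (\<forall>j<N. outcome (\<lambda>q. trop_row (query_row N l q) x) (learn_all N l k) j = x ! j)"
      unfolding answers by (meson order_trans)
  qed simp
  show "within_delay T N l (strategy_protocol (query_row N l) (learn_all N l k))"
    by (rule within_delay_strategy_protocol) (rule query_row_within_delay)
qed

end
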